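(* For $N\in\mathbb{N}$ and $m\in\mathbb{Z}_+$, $$\gamma_N^{2m,2m}=2^{2m}\,m!\,(2m)!\,\Bigl(\frac N2+m-1\Bigr)_m.$$
   Context: $|x|_N$ is the Euclidean norm on $\mathbb{R}^N$, $I_N=\{1,\ldots,N\}$, $D_i=\partial_{x_{i_1}}\cdots\partial_{x_{i_k}}$ for $i\in I_N^k$, $|\nabla_N^k u(x)|_{N^k}=\bigl(\sum_{i\in I_N^k}(D_iu(x))^2\bigr)^{1/2}$ (for $k=0$ this is $|u(x)|$). For $k\in\mathbb{Z}_+$, $s\in\mathbb{R}$, $\gamma_N^{s,k}$ denotes the constant value of $(|x|_N^{k-s}|\nabla_N^k[|x|_N^s]|_{N^k})^2$ on $\mathbb{R}^N\setminus\{0\}$ (it is known to be constant). $(\nu)_m=\prod_{j=0}^{m-1}(\nu-j)$, $(\nu)_0=1$. *)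

theory Defs
  imports "HOL-Analysis.Analysis"
begin

text \<open>Points of R^N are vectors of type real^'n with N = CARD('n).\<close>

definition partial_deriv :: "'n::finite \<Rightarrow> (real^'n \<Rightarrow> real) \<Rightarrow> real^'n \<Rightarrow> real" where
  "partial_deriv i f x = deriv (\<lambda>t. f (x + t *\<^sub>R axis i 1)) 0"

fun iter_partial :: "'n::finite list \<Rightarrow> (real^'n \<Rightarrow> real) \<Rightarrow> real^'n \<Rightarrow> real" where
  "iter_partial [] f = f"
| "iter_partial (i # is) f = partial_deriv i (iter_partial is f)"

definition norm_nabla :: "nat \<Rightarrow> (real^'n::finite \<Rightarrow> real) \<Rightarrow> real^'n \<Rightarrow> real" where
  "norm_nabla k u x = sqrt (\<Sum>is\<in>{is :: 'n list. length is = k}. (iter_partial is u x)^2)"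

text \<open>The quantity (|x|^{k-s} |nabla^k [|x|^s]|)^2 whose constant value is gamma_N^{s,k}.\<close>
definition gamma_expr :: "real \<Rightarrow> nat \<Rightarrow> real^'n::finite \<Rightarrow> real" where
  "gamma_expr s k x = (norm x powr (real k - s) * norm_nabla k (\<lambda>y. norm y powr s) x)^2"

definition falling :: "real \<Rightarrow> nat \<Rightarrow> real" where
  "falling \<nu> m = (\<Prod>j<m. \<nu> - real j)"

end

theory Submission imports Defs begin

text \<open>
  Write \<open>Q y = \<Sum>l. y\<^sub>l\<^sup>2\<close> and \<open>B\<^sub>k(u, v) = \<Sum>\<^sub>|\<^sub>i\<^sub>|\<^sub>=\<^sub>k D\<^sub>i u \<cdot> D\<^sub>i v\<close>. Then \<open>|x|\<^sup>2\<^sup>m = Q\<^sup>m\<close> is a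
  polynomial of degree \<open>2m\<close> and \<open>\<gamma>\<close> is \<open>B\<^sub>2\<^sub>m(Q\<^sup>m, Q\<^sup>m)\<close> at \<open>x\<close>. For polynomials with
  \<open>deg G < k\<close> one has \<open>B\<^sub>k(y\<^sub>j G, v) = k B\<^sub>k\<^sub>-\<^sub>1(G, \<partial>\<^sub>j v)\<close>: by the Leibniz rule, each term in
  which no derivative falls on the factor \<open>y\<^sub>j\<close> is a \<open>k\<close>-th derivative of \<open>G\<close>, hence zero.
  Since \<open>\<partial>\<^sub>j Q\<^sup>m\<^sup>+\<^sup>1 = 2(m+1) y\<^sub>j Q\<^sup>m\<close>, two such steps give \<open>B\<^sub>2\<^sub>m(Q\<^sup>m, v) = (2m)! \<Delta>\<^sup>m v\<close>,
  and \<open>\<Delta>\<^sup>m Q\<^sup>m\<close> is the constant \<open>\<Prod>k<m. 2(k+1)(N+2k) = 2\<^sup>2\<^sup>m m! (N/2)\<^sup>(\<^sup>m\<^sup>)\<close>,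
  a rising factorial equal to \<open>2\<^sup>2\<^sup>m m! (N/2+m-1)\<^sub>m\<close>.
\<close>

inductive poly_deg_le :: "nat \<Rightarrow> (real^'n::finite \<Rightarrow> real) \<Rightarrow> bool" where
  const: "poly_deg_le 0 (\<lambda>x. c)"
| coord: "poly_deg_le 1 (\<lambda>x. x$j)"
| add: "poly_deg_le d f \<Longrightarrow> poly_deg_le d g \<Longrightarrow> poly_deg_le d (\<lambda>x. f x + g x)"
| mult: "poly_deg_le d f \<Longrightarrow> poly_deg_le e g \<Longrightarrow> poly_deg_le (d + e) (\<lambda>x. f x * g x)"
| mono: "poly_deg_le d f \<Longrightarrow> d \<le> e \<Longrightarrow> poly_deg_le e f"

definition polynomial :: "(real^'n::finite \<Rightarrow> real) \<Rightarrow> bool" where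
  "polynomial f \<longleftrightarrow> (\<exists>d. poly_deg_le d f)"

lemma poly_deg_le_zero: "poly_deg_le d (\<lambda>x. 0)"
  using poly_deg_le.mono[OF poly_deg_le.const[of 0]] by simp

lemma poly_deg_le_sum:
  "finite S \<Longrightarrow> (\<And>i. i \<in> S \<Longrightarrow> poly_deg_le d (f i)) \<Longrightarrow> poly_deg_le d (\<lambda>x. \<Sum>i\<in>S. f i x)"
  by (induction S rule: finite_induct) (auto intro: poly_deg_le_zero poly_deg_le.add)

lemma poly_deg_le_mult_pred:
  assumes "poly_deg_le (d - 1) f" "d = 0 \<Longrightarrow> f = (\<lambda>x. 0)" "poly_deg_le e g"
  shows "poly_deg_le (d + e - 1) (\<lambda>x. f x * g x)"
proof (cases "d = 0")
  case True
  then show ?thesis using assms(2) by (simp add: poly_deg_le_zero)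
next
  case False
  then show ?thesis using poly_deg_le.mult[OF assms(1,3)] by simp
qed

text \<open>As \<open>d - 1\<close> truncates at \<open>0\<close>, the degree bound alone does not make derivatives of
  constants vanish; hence the separate clause for \<open>d = 0\<close>.\<close>

lemma poly_deg_le_has_partial:
  assumes "poly_deg_le d f"
  shows "\<exists>D. poly_deg_le (d - 1) D \<and> (d = 0 \<longrightarrow> D = (\<lambda>x. 0)) \<and>
    (\<forall>x. ((\<lambda>t. f (x + t *\<^sub>R axis j 1)) has_real_derivative D x) (at 0))"
  using assms
proof induction
  case (const c)
  show ?case by (rule exI[of _ "\<lambda>x. 0"]) (auto intro: poly_deg_le_zero)
next
  case (coord i)
  show ?case
    by (rule exI[of _ "\<lambda>x. if i = j then 1 else 0"])
      (auto intro!: derivative_eq_intros poly_deg_le.const simp: axis_def)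
next
  case (add d f g)
  then obtain Df Dg where "poly_deg_le (d - 1) Df" "d = 0 \<longrightarrow> Df = (\<lambda>x. 0)"
      "\<forall>x. ((\<lambda>t. f (x + t *\<^sub>R axis j 1)) has_real_derivative Df x) (at 0)"
    and "poly_deg_le (d - 1) Dg" "d = 0 \<longrightarrow> Dg = (\<lambda>x. 0)"
      "\<forall>x. ((\<lambda>t. g (x + t *\<^sub>R axis j 1)) has_real_derivative Dg x) (at 0)" by blast
  then show ?case
    by (intro exI[of _ "\<lambda>x. Df x + Dg x"]) (auto intro!: derivative_eq_intros poly_deg_le.add)
next
  case (mult d f e g)
  then obtain Df Dg where Df: "poly_deg_le (d - 1) Df" "d = 0 \<longrightarrow> Df = (\<lambda>x. 0)"
      "\<forall>x. ((\<lambda>t. f (x + t *\<^sub>R axis j 1)) has_real_derivative Df x) (at 0)"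
    and Dg: "poly_deg_le (e - 1) Dg" "e = 0 \<longrightarrow> Dg = (\<lambda>x. 0)"
      "\<forall>x. ((\<lambda>t. g (x + t *\<^sub>R axis j 1)) has_real_derivative Dg x) (at 0)" by blast
  have "poly_deg_le (d + e - 1) (\<lambda>x. Df x * g x)"
    using poly_deg_le_mult_pred Df mult.hyps(2) by blast
  moreover have "poly_deg_le (e + d - 1) (\<lambda>x. Dg x * f x)"
    using poly_deg_le_mult_pred Dg mult.hyps(1) by blast
  ultimately have "poly_deg_le (d + e - 1) (\<lambda>x. Df x * g x + f x * Dg x)"
    by (auto simp: add.commute mult.commute intro: poly_deg_le.add)
  then show ?case using Df Dg
    by (intro exI[of _ "\<lambda>x. Df x * g x + f x * Dg x"]) (auto intro!: derivative_eq_intros)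
next
  case (mono d f e)
  then obtain D where "poly_deg_le (d - 1) D" "d = 0 \<longrightarrow> D = (\<lambda>x. 0)"
      "\<forall>x. ((\<lambda>t. f (x + t *\<^sub>R axis j 1)) has_real_derivative D x) (at 0)" by blast
  with mono.hyps(2) show ?case by (intro exI[of _ D]) (auto intro: poly_deg_le.mono)
qed

lemma partial_deriv_eqI:
  "(\<And>x. ((\<lambda>t. f (x + t *\<^sub>R axis j 1)) has_real_derivative D x) (at 0)) \<Longrightarrow> partial_deriv j f = D"
  unfolding partial_deriv_def fun_eq_iff by (auto intro!: DERIV_imp_deriv)

lemma poly_deg_le_partial_deriv:
  assumes "poly_deg_le d f"
  shows "((\<lambda>t. f (x + t *\<^sub>R axis j 1)) has_real_derivative partial_deriv j f x) (at 0)"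
    and "poly_deg_le (d - 1) (partial_deriv j f)"
    and "d = 0 \<Longrightarrow> partial_deriv j f = (\<lambda>x. 0)"
proof -
  obtain D where "poly_deg_le (d - 1) D" "d = 0 \<longrightarrow> D = (\<lambda>x. 0)"
    and D: "\<forall>x. ((\<lambda>t. f (x + t *\<^sub>R axis j 1)) has_real_derivative D x) (at 0)"
    using poly_deg_le_has_partial[OF assms] by blast
  moreover have "partial_deriv j f = D" using D by (intro partial_deriv_eqI) auto
  ultimately show "((\<lambda>t. f (x + t *\<^sub>R axis j 1)) has_real_derivative partial_deriv j f x) (at 0)"
    and "poly_deg_le (d - 1) (partial_deriv j f)" and "d = 0 \<Longrightarrow> partial_deriv j f = (\<lambda>x. 0)"
    by auto
qed

lemma polynomial_has_partial_deriv:
  "polynomial f \<Longrightarrow> ((\<lambda>t. f (x + t *\<^sub>R axis j 1)) has_real_derivative partial_deriv j f x) (at 0)"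
  unfolding polynomial_def using poly_deg_le_partial_deriv(1) by blast

lemma polynomial_partial_deriv: "polynomial f \<Longrightarrow> polynomial (partial_deriv j f)"
  unfolding polynomial_def using poly_deg_le_partial_deriv(2) by blast

lemma polynomial_const: "polynomial (\<lambda>x. c)"
  unfolding polynomial_def by (metis poly_deg_le.const)

lemma polynomial_coord: "polynomial (\<lambda>x. x$j)"
  unfolding polynomial_def by (metis poly_deg_le.coord)

lemma polynomial_add: "polynomial f \<Longrightarrow> polynomial g \<Longrightarrow> polynomial (\<lambda>x. f x + g x)"
  unfolding polynomial_def by (metis poly_deg_le.add poly_deg_le.mono max.cobounded1 max.cobounded2)

lemma polynomial_mult: "polynomial f \<Longrightarrow> polynomial g \<Longrightarrow> polynomial (\<lambda>x. f x * g x)"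
  unfolding polynomial_def by (metis poly_deg_le.mult)

lemma polynomial_cmult: "polynomial f \<Longrightarrow> polynomial (\<lambda>x. c * f x)"
  using polynomial_mult[OF polynomial_const] by blast

lemma polynomial_sum:
  "finite S \<Longrightarrow> (\<And>i. i \<in> S \<Longrightarrow> polynomial (f i)) \<Longrightarrow> polynomial (\<lambda>x. \<Sum>i\<in>S. f i x)"
  by (induction S rule: finite_induct) (auto intro: polynomial_const polynomial_add)

lemma partial_deriv_const: "partial_deriv j (\<lambda>x. c) = (\<lambda>x. 0)"
  by (rule partial_deriv_eqI) (auto intro!: derivative_eq_intros)

lemma partial_deriv_coord: "partial_deriv j (\<lambda>x. x$i) = (\<lambda>x. if i = j then 1 else 0)"
  by (rule partial_deriv_eqI) (auto intro!: derivative_eq_intros simp: axis_def)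

lemma partial_deriv_add:
  "polynomial f \<Longrightarrow> polynomial g \<Longrightarrow>
   partial_deriv j (\<lambda>x. f x + g x) = (\<lambda>x. partial_deriv j f x + partial_deriv j g x)"
  by (rule partial_deriv_eqI) (auto intro!: derivative_eq_intros polynomial_has_partial_deriv)

lemma partial_deriv_mult:
  "polynomial f \<Longrightarrow> polynomial g \<Longrightarrow>
   partial_deriv j (\<lambda>x. f x * g x) = (\<lambda>x. partial_deriv j f x * g x + f x * partial_deriv j g x)"
  by (rule partial_deriv_eqI) (auto intro!: derivative_eq_intros polynomial_has_partial_deriv)

lemma partial_deriv_cmult:
  "polynomial f \<Longrightarrow> partial_deriv j (\<lambda>x. c * f x) = (\<lambda>x. c * partial_deriv j f x)"
  by (rule partial_deriv_eqI) (auto intro!: derivative_eq_intros polynomial_has_partial_deriv)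

lemma partial_deriv_sum:
  "finite S \<Longrightarrow> (\<And>i. i \<in> S \<Longrightarrow> polynomial (f i)) \<Longrightarrow>
   partial_deriv j (\<lambda>x. \<Sum>i\<in>S. f i x) = (\<lambda>x. \<Sum>i\<in>S. partial_deriv j (f i) x)"
  by (rule partial_deriv_eqI) (auto intro!: derivative_eq_intros polynomial_has_partial_deriv)

lemma partial_deriv_commute:
  "poly_deg_le d f \<Longrightarrow> partial_deriv j (partial_deriv l f) = partial_deriv l (partial_deriv j f)"
proof (induction rule: poly_deg_le.induct)
  case (const c)
  show ?case by (simp add: partial_deriv_const)
next
  case (coord i)
  show ?case by (simp add: partial_deriv_coord partial_deriv_const)
next
  case (add d f g)
  then have "polynomial f" "polynomial g" unfolding polynomial_def by auto
  then show ?case using add.IH by (simp add: partial_deriv_add polynomial_partial_deriv)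
next
  case (mult d f e g)
  then have "polynomial f" "polynomial g" unfolding polynomial_def by auto
  then show ?case using mult.IH
    by (simp add: partial_deriv_add partial_deriv_mult polynomial_partial_deriv polynomial_mult
        algebra_simps)
qed

lemma polynomial_iter_partial: "polynomial f \<Longrightarrow> polynomial (iter_partial is f)"
  by (induction "is") (auto intro: polynomial_partial_deriv)

lemma iter_partial_add:
  "polynomial f \<Longrightarrow> polynomial g \<Longrightarrow>
   iter_partial is (\<lambda>x. f x + g x) = (\<lambda>x. iter_partial is f x + iter_partial is g x)"
  by (induction "is") (auto simp: partial_deriv_add polynomial_iter_partial)

lemma iter_partial_cmult:
  "polynomial f \<Longrightarrow> iter_partial is (\<lambda>x. c * f x) = (\<lambda>x. c * iter_partial is f x)"
  by (induction "is") (auto simp: partial_deriv_cmult polynomial_iter_partial)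

lemma iter_partial_sum:
  "finite S \<Longrightarrow> (\<And>i. i \<in> S \<Longrightarrow> polynomial (f i)) \<Longrightarrow>
   iter_partial is (\<lambda>x. \<Sum>i\<in>S. f i x) = (\<lambda>x. \<Sum>i\<in>S. iter_partial is (f i) x)"
  by (induction "is") (auto simp: partial_deriv_sum polynomial_iter_partial)

lemma iter_partial_partial_deriv:
  "polynomial f \<Longrightarrow> iter_partial is (partial_deriv j f) = partial_deriv j (iter_partial is f)"
proof (induction "is")
  case (Cons i "is")
  then show ?case
    using polynomial_iter_partial[OF Cons.prems, of "is"]
    by (auto simp: polynomial_def partial_deriv_commute)
qed simp

definition nabla_inner :: "nat \<Rightarrow> (real^'n::finite \<Rightarrow> real) \<Rightarrow> (real^'n \<Rightarrow> real) \<Rightarrow> real^'n \<Rightarrow> real"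
  where "nabla_inner k u v x = (\<Sum>is\<in>{is. length is = k}. iter_partial is u x * iter_partial is v x)"

lemma norm_nabla_power2: "norm_nabla k u x ^ 2 = nabla_inner k u u x"
  unfolding norm_nabla_def nabla_inner_def by (simp add: sum_nonneg power2_eq_square)

lemma nabla_inner_0: "nabla_inner 0 u v x = u x * v x"
proof -
  have "{is :: 'n list. length is = 0} = {[]}" by auto
  then show ?thesis by (simp add: nabla_inner_def)
qed

lemma nabla_inner_Suc:
  assumes "polynomial u" "polynomial v"
  shows "nabla_inner (Suc k) u v x = (\<Sum>j\<in>UNIV. nabla_inner k (partial_deriv j u) (partial_deriv j v) x)"
proof -
  have lists: "{is :: 'n list. length is = Suc k} = (\<lambda>(is, j). j # is) ` ({is. length is = k} \<times> UNIV)"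
    using lists_length_Suc_eq[of "UNIV :: 'n set" k] by simp
  have "nabla_inner (Suc k) u v x = (\<Sum>p\<in>{is. length is = k} \<times> UNIV.
      iter_partial (snd p # fst p) u x * iter_partial (snd p # fst p) v x)"
    unfolding nabla_inner_def lists
    by (subst sum.reindex[OF inj_split_Cons]) (simp add: case_prod_beta)
  also have "\<dots> = (\<Sum>is\<in>{is. length is = k}. \<Sum>j\<in>UNIV.
      iter_partial is (partial_deriv j u) x * iter_partial is (partial_deriv j v) x)"
    by (subst sum.cartesian_product) (simp add: case_prod_beta iter_partial_partial_deriv assms)
  also have "\<dots> = (\<Sum>j\<in>UNIV. nabla_inner k (partial_deriv j u) (partial_deriv j v) x)"
    unfolding nabla_inner_def by (rule sum.swap)
  finally show ?thesis .
qed

lemma nabla_inner_add_left: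
  "polynomial f \<Longrightarrow> polynomial g \<Longrightarrow>
   nabla_inner k (\<lambda>y. f y + g y) w x = nabla_inner k f w x + nabla_inner k g w x"
  unfolding nabla_inner_def by (simp add: iter_partial_add sum.distrib[symmetric] algebra_simps)

lemma nabla_inner_cmult_left:
  "polynomial f \<Longrightarrow> nabla_inner k (\<lambda>y. c * f y) w x = c * nabla_inner k f w x"
  unfolding nabla_inner_def by (simp add: iter_partial_cmult sum_distrib_left mult.assoc)

lemma nabla_inner_sum_right:
  "finite S \<Longrightarrow> (\<And>i. i \<in> S \<Longrightarrow> polynomial (w i)) \<Longrightarrow>
   nabla_inner k u (\<lambda>y. \<Sum>i\<in>S. w i y) x = (\<Sum>i\<in>S. nabla_inner k u (w i) x)"
  unfolding nabla_inner_def by (simp add: iter_partial_sum sum_distrib_left sum.swap[of _ S])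

lemma nabla_inner_Suc_coord_mult:
  assumes G: "polynomial G" and w: "polynomial w"
  shows "nabla_inner (Suc k) (\<lambda>y. y$j * G y) w x = nabla_inner k G (partial_deriv j w) x +
    (\<Sum>l\<in>UNIV. nabla_inner k (\<lambda>y. y$j * partial_deriv l G y) (partial_deriv l w) x)"
proof -
  have "partial_deriv l (\<lambda>y. y$j * G y) =
      (\<lambda>y. (if j = l then 1 else 0) * G y + y$j * partial_deriv l G y)" for l
    by (simp add: partial_deriv_mult polynomial_coord G partial_deriv_coord)
  then have "nabla_inner (Suc k) (\<lambda>y. y$j * G y) w x =
      (\<Sum>l\<in>UNIV. (if j = l then 1 else 0) * nabla_inner k G (partial_deriv l w) x
        + nabla_inner k (\<lambda>y. y$j * partial_deriv l G y) (partial_deriv l w) x)"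
    by (simp add: nabla_inner_Suc polynomial_mult polynomial_coord G w nabla_inner_add_left
        polynomial_cmult polynomial_partial_deriv nabla_inner_cmult_left)
  moreover have "(if j = l then 1 else 0) * a = (if j = l then a else 0)" for l and a :: real
    by simp
  ultimately show ?thesis by (simp only: sum.distrib) simp
qed

lemma nabla_inner_coord_mult:
  assumes "poly_deg_le d G" "d < k" "polynomial w"
  shows "nabla_inner k (\<lambda>y. y$j * G y) w x = real k * nabla_inner (k - 1) G (partial_deriv j w) x"
  using assms
proof (induction k arbitrary: d G w)
  case (Suc k)
  have G: "polynomial G" and w: "polynomial w"
    using Suc.prems by (auto simp: polynomial_def)
  have "(\<Sum>l\<in>UNIV. nabla_inner k (\<lambda>y. y$j * partial_deriv l G y) (partial_deriv l w) x)
      = real k * nabla_inner k G (partial_deriv j w) x"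
  proof (cases k)
    case 0
    then have "partial_deriv l G = (\<lambda>x. 0)" for l
      using Suc.prems poly_deg_le_partial_deriv(3) by fastforce
    then show ?thesis using 0 by (simp add: nabla_inner_0)
  next
    case (Suc k')
    have "nabla_inner k (\<lambda>y. y$j * partial_deriv l G y) (partial_deriv l w) x
        = real k * nabla_inner k' (partial_deriv l G) (partial_deriv l (partial_deriv j w)) x" for l
    proof -
      have "poly_deg_le (d - 1) (partial_deriv l G)" "d - 1 < k"
        using Suc.prems poly_deg_le_partial_deriv(2) \<open>k = Suc k'\<close> by auto
      then show ?thesis
        using Suc.IH[OF _ _ polynomial_partial_deriv[OF w]] w \<open>k = Suc k'\<close>
        by (auto simp: polynomial_def partial_deriv_commute)
    qed
    then show ?thesis
      using Suc by (simp add: nabla_inner_Suc G w polynomial_partial_deriv sum_distrib_left)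
  qed
  then show ?case
    unfolding nabla_inner_Suc_coord_mult[OF G w] by (simp add: algebra_simps)
qed simp

definition norm_sq :: "real^'n::finite \<Rightarrow> real" where
  "norm_sq y = (\<Sum>l\<in>UNIV. (y$l)^2)"

definition norm_sq_pow :: "nat \<Rightarrow> real^'n::finite \<Rightarrow> real" where
  "norm_sq_pow m y = norm_sq y ^ m"

definition laplacian :: "(real^'n::finite \<Rightarrow> real) \<Rightarrow> real^'n \<Rightarrow> real" where
  "laplacian v x = (\<Sum>l\<in>UNIV. partial_deriv l (partial_deriv l v) x)"

lemma poly_deg_le_norm_sq_pow: "poly_deg_le (2 * m) (norm_sq_pow m :: real^'n::finite \<Rightarrow> real)"
proof (induction m)
  case 0
  show ?case using poly_deg_le.const[of 1] by (simp add: norm_sq_pow_def[abs_def])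
next
  case (Suc m)
  have "poly_deg_le (1 + 1) (\<lambda>y::real^'n. \<Sum>l\<in>UNIV. y$l * y$l)"
    by (intro poly_deg_le_sum poly_deg_le.mult poly_deg_le.coord) simp
  then have "poly_deg_le 2 (norm_sq :: real^'n \<Rightarrow> real)"
    unfolding one_add_one by (simp add: norm_sq_def[abs_def] power2_eq_square)
  from poly_deg_le.mult[OF this Suc.IH] show ?case
    by (simp add: norm_sq_pow_def[abs_def])
qed

lemma polynomial_norm_sq_pow: "polynomial (norm_sq_pow m)"
  using poly_deg_le_norm_sq_pow polynomial_def by blast

lemma partial_deriv_norm_sq_pow_Suc:
  "partial_deriv j (norm_sq_pow (Suc m) :: real^'n::finite \<Rightarrow> real) =
   (\<lambda>y. 2 * real (Suc m) * (y$j * norm_sq_pow m y))"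
proof (rule partial_deriv_eqI)
  fix x :: "real^'n"
  have coord: "((x + t *\<^sub>R axis j 1)$l)^2 = (x$l)^2 + (if l = j then 2*t*x$j + t^2 else 0)" for l t
    by (auto simp: axis_def power2_eq_square algebra_simps)
  have "(\<lambda>t. norm_sq (x + t *\<^sub>R axis j 1)) = (\<lambda>t. norm_sq x + (2*t*x$j + t^2))"
    unfolding norm_sq_def coord sum.distrib by simp
  then have "((\<lambda>t. norm_sq (x + t *\<^sub>R axis j 1)) has_real_derivative 2 * x$j) (at 0)"
    by (auto intro!: derivative_eq_intros)
  from DERIV_power[OF this, of "Suc m"]
  show "((\<lambda>t. norm_sq_pow (Suc m) (x + t *\<^sub>R axis j 1)) has_real_derivative
      2 * real (Suc m) * (x$j * norm_sq_pow m x)) (at 0)"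
    by (simp add: norm_sq_pow_def algebra_simps)
qed

lemma polynomial_laplacian: "polynomial v \<Longrightarrow> polynomial (laplacian v)"
  unfolding laplacian_def[abs_def] by (intro polynomial_sum) (auto intro: polynomial_partial_deriv)

lemma laplacian_cmult: "polynomial v \<Longrightarrow> laplacian (\<lambda>y. c * v y) = (\<lambda>y. c * laplacian v y)"
  unfolding laplacian_def[abs_def]
  by (simp add: partial_deriv_cmult polynomial_partial_deriv sum_distrib_left)

lemma funpow_laplacian_cmult:
  "polynomial v \<Longrightarrow> (laplacian ^^ i) (\<lambda>y. c * v y) = (\<lambda>y. c * (laplacian ^^ i) v y)"
  by (induction i arbitrary: v)
    (simp_all only: funpow_Suc_right comp_apply laplacian_cmult polynomial_laplacian funpow_0)

lemma laplacian_norm_sq_pow_Suc: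
  "laplacian (norm_sq_pow (Suc k) :: real^'n::finite \<Rightarrow> real) =
   (\<lambda>y. 2 * real (Suc k) * (real CARD('n) + 2 * real k) * norm_sq_pow k y)"
proof -
  have second: "partial_deriv l (partial_deriv l (norm_sq_pow (Suc k) :: real^'n \<Rightarrow> real)) =
     (\<lambda>y. 2 * real (Suc k) * (norm_sq_pow k y + y$l * partial_deriv l (norm_sq_pow k) y))" for l
    by (simp add: partial_deriv_norm_sq_pow_Suc partial_deriv_cmult partial_deriv_mult
        polynomial_mult polynomial_coord polynomial_norm_sq_pow partial_deriv_coord)
  show ?thesis
  proof (cases k)
    case 0
    have "partial_deriv l (norm_sq_pow 0 :: real^'n \<Rightarrow> real) = (\<lambda>x. 0)" for l
      using poly_deg_le_partial_deriv(3)[OF poly_deg_le_norm_sq_pow[of 0]] by simp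
    then show ?thesis
      using 0 unfolding laplacian_def[abs_def] second by (simp add: norm_sq_pow_def mult.commute)
  next
    case (Suc k')
    have "(\<Sum>l\<in>UNIV. 2 * real (Suc k) * (norm_sq_pow k y + y$l * (2 * real k * (y$l * norm_sq_pow k' y))))
      = 2 * real (Suc k) * (real CARD('n) * norm_sq_pow k y + 2 * real k * (norm_sq y * norm_sq_pow k' y))"
      for y :: "real^'n"
      by (simp add: sum.distrib sum_distrib_left sum_distrib_right norm_sq_def algebra_simps
          power2_eq_square)
    moreover have "norm_sq y * norm_sq_pow k' y = norm_sq_pow k y" for y :: "real^'n"
      using Suc by (simp add: norm_sq_pow_def)
    ultimately show ?thesis
      using Suc unfolding laplacian_def[abs_def] second
      by (simp add: partial_deriv_norm_sq_pow_Suc fun_eq_iff algebra_simps)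
  qed
qed

lemma funpow_laplacian_norm_sq_pow:
  "(laplacian ^^ m) (norm_sq_pow m :: real^'n::finite \<Rightarrow> real) =
   (\<lambda>y. \<Prod>k<m. 2 * real (Suc k) * (real CARD('n) + 2 * real k))"
proof (induction m)
  case 0
  show ?case by (simp add: norm_sq_pow_def[abs_def])
next
  case (Suc m)
  have "(laplacian ^^ Suc m) (norm_sq_pow (Suc m) :: real^'n \<Rightarrow> real) =
      (laplacian ^^ m) (\<lambda>y. 2 * real (Suc m) * (real CARD('n) + 2 * real m) * norm_sq_pow m y)"
    by (simp only: funpow_Suc_right comp_apply laplacian_norm_sq_pow_Suc)
  also have "\<dots> = (\<lambda>y. 2 * real (Suc m) * (real CARD('n) + 2 * real m) *
      (\<Prod>k<m. 2 * real (Suc k) * (real CARD('n) + 2 * real k)))"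
    by (simp only: funpow_laplacian_cmult polynomial_norm_sq_pow Suc.IH)
  finally show ?case by (simp only: prod.lessThan_Suc mult_ac)
qed

lemma nabla_inner_norm_sq_pow:
  "polynomial v \<Longrightarrow> nabla_inner (2 * m) (norm_sq_pow m) v x = fact (2 * m) * (laplacian ^^ m) v x"
proof (induction m arbitrary: v)
  case 0
  then show ?case by (simp add: nabla_inner_0 norm_sq_pow_def)
next
  case (Suc m)
  have dv: "polynomial (partial_deriv j v)" for j
    using Suc.prems polynomial_partial_deriv by blast
  have "nabla_inner (Suc (Suc (2 * m))) (norm_sq_pow (Suc m)) v x =
      (\<Sum>j\<in>UNIV. nabla_inner (Suc (2 * m)) (\<lambda>y. 2 * real (Suc m) * (y$j * norm_sq_pow m y))
        (partial_deriv j v) x)"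
    by (simp only: nabla_inner_Suc[OF polynomial_norm_sq_pow Suc.prems] partial_deriv_norm_sq_pow_Suc)
  also have "\<dots> = (\<Sum>j\<in>UNIV. 2 * real (Suc m) * (real (Suc (2 * m)) *
      nabla_inner (2 * m) (norm_sq_pow m) (partial_deriv j (partial_deriv j v)) x))"
    by (simp add: nabla_inner_cmult_left polynomial_mult polynomial_coord polynomial_norm_sq_pow
        nabla_inner_coord_mult[OF poly_deg_le_norm_sq_pow _ dv])
  also have "\<dots> = 2 * real (Suc m) * real (Suc (2 * m)) * nabla_inner (2 * m) (norm_sq_pow m) (laplacian v) x"
    unfolding laplacian_def[abs_def]
    by (simp add: nabla_inner_sum_right dv polynomial_partial_deriv sum_distrib_left mult.assoc)
  also have "\<dots> = fact (2 * Suc m) * (laplacian ^^ Suc m) v x"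
    using Suc.IH[OF polynomial_laplacian[OF Suc.prems]] by (simp add: funpow_swap1 algebra_simps)
  finally show ?case by simp
qed

lemma falling_eq_pochhammer: "falling (c + real m - 1) m = pochhammer c m"
proof (induction m arbitrary: c)
  case (Suc m)
  have "falling (c + real (Suc m) - 1) (Suc m) = (c + real m) * falling (c + real m - 1) m"
    unfolding falling_def by (subst prod.lessThan_Suc_shift) (simp add: algebra_simps)
  then show ?case using Suc.IH by (simp add: pochhammer_Suc mult.commute)
qed (simp add: falling_def)

lemma prod_eq_pochhammer_half:
  "(\<Prod>k<m. 2 * real (Suc k) * (N + 2 * real k)) = 2 ^ (2 * m) * fact m * pochhammer (N / 2) m"
  by (induction m) (simp_all add: pochhammer_Suc algebra_simps power_add)

lemma gamma_expr_eq_nabla_inner: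
  assumes "x \<noteq> 0"
  shows "gamma_expr (real k) k x = nabla_inner k (\<lambda>y. norm y powr real k) (\<lambda>y. norm y powr real k) x"
  using assms by (simp add: gamma_expr_def power_mult_distrib norm_nabla_power2)

lemma norm_powr_even_eq_norm_sq_pow:
  assumes "m \<noteq> 0"
  shows "(\<lambda>y::real^'n::finite. norm y powr real (2 * m)) = norm_sq_pow m"
proof
  fix y :: "real^'n"
  have "norm y ^ 2 = norm_sq y"
    unfolding power2_norm_eq_inner norm_sq_def inner_vec_def by (simp add: power2_eq_square)
  moreover have "norm y powr real (2 * m) = norm y ^ (2 * m)" if "y \<noteq> 0"
    using that powr_realpow[of "norm y" "2 * m"] by simp
  ultimately show "norm y powr real (2 * m) = norm_sq_pow m y"
    using assms by (cases "y = 0") (simp_all add: norm_sq_pow_def power_mult)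
qed

theorem lemma3p3:
  fixes m :: nat and x :: "real^'n::finite"
  assumes "x \<noteq> 0"
  shows "gamma_expr (real (2*m)) (2*m) x =
    2^(2*m) * fact m * fact (2*m) * falling (real CARD('n) / 2 + real m - 1) m"
proof (cases "m = 0")
  case True
  then show ?thesis
    using gamma_expr_eq_nabla_inner[OF assms, of 0] assms by (simp add: nabla_inner_0 falling_def)
next
  case False
  have "gamma_expr (real (2*m)) (2*m) x = nabla_inner (2 * m) (norm_sq_pow m) (norm_sq_pow m) x"
    unfolding norm_powr_even_eq_norm_sq_pow[OF False, symmetric]
    by (rule gamma_expr_eq_nabla_inner[OF assms])
  also have "\<dots> = fact (2 * m) * (\<Prod>k<m. 2 * real (Suc k) * (real CARD('n) + 2 * real k))"
    by (simp add: nabla_inner_norm_sq_pow polynomial_norm_sq_pow funpow_laplacian_norm_sq_pow)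
  also have "\<dots> = 2^(2*m) * fact m * fact (2*m) * falling (real CARD('n) / 2 + real m - 1) m"
    by (simp only: prod_eq_pochhammer_half falling_eq_pochhammer) (simp only: mult_ac)
  finally show ?thesis .
qed

end
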